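(* Let $1\le r\le N-1$ and let $\mathcal A=\mathbb{C}^{N\times N}((\epsilon))$ denote the ring of matrix asymptotic expansions $M_0+M_1\epsilon+O(\epsilon^2)$, $M_i\in\mathbb{C}^{N\times N}$, $\epsilon\to0$. Write matrices in block form $\begin{pmatrix}A&B\\C&D\end{pmatrix}$ with $A\in\mathbb{C}^{r\times r}$, $B\in\mathbb{C}^{r\times(N-r)}$, $C\in\mathbb{C}^{(N-r)\times r}$, $D\in\mathbb{C}^{(N-r)\times(N-r)}$. Let $\mathfrak K$ be the set of matrices with $A=0,B=0$, and $\mathfrak L$ the set of matrices with $B=0,D=0$; let $\mathcal A_{\mathfrak K}=\{K\in\mathcal A: K|_{\epsilon=0}\in\mathfrak K\}$ and $\mathcal A_{\mathfrak L}=\{L\in\mathcal A: L|_{\epsilon=0}\in\mathfrak L\}$. Then: (1) $\mathcal A_{\mathfrak K}$ and $\mathcal A_{\mathfrak L}$ are subrings (without identity) of $\mathcal A$. (2) If $K\in\mathcal A_{\mathfrak K}$ with $\det K=O(\epsilon^r)$ as $\epsilon\to0$, then $K^{-1}\in\epsilon^{-1}\mathcal A_{\mathfrak L}$; conversely, if $L\in\epsilon^{-1}\mathcal A_{\mathfrak L}$ with $\det L=O(\epsilon^{-r})$, then $L^{-1}\in\mathcal A_{\mathfrak K}$. (3) If $K=\begin{pmatrix}0&0\\C_0&D_0\end{pmatrix}+\begin{pmatrix}A_1&B_1\\C_1&D_1\end{pmatrix}\epsilon+O(\epsilon^2)\in\mathcal A_{\mathfrak K}$, then $\det K=\epsilon^r\det\begin{pmatrix}A_1&B_1\\C_0&D_0\end{pmatrix}+O(\epsilon^{r+1})$.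 (4) If $L=\begin{pmatrix}A_0&0\\C_0&0\end{pmatrix}\epsilon^{-1}+\begin{pmatrix}A_1&B_1\\C_1&D_1\end{pmatrix}+O(\epsilon)\in\epsilon^{-1}\mathcal A_{\mathfrak L}$, then $\det L=\epsilon^{-r}\det\begin{pmatrix}A_0&B_1\\C_0&D_1\end{pmatrix}+O(\epsilon^{-r+1})$. (5) $\mathcal A_{\mathfrak K}\cdot\mathcal A\subset\mathcal A_{\mathfrak K}$ and $\mathcal A\cdot\mathcal A_{\mathfrak L}\subset\mathcal A_{\mathfrak L}$ (right and left ideals, respectively). (6) $\epsilon^{-1}\mathcal A_{\mathfrak L}\cdot\mathcal A_{\mathfrak K}\subset\mathcal A$.
   Context: A condition $\det X=O(\epsilon^{k})$ is understood in the paper's sense of exact order: $\det X=c\,\epsilon^{k}+O(\epsilon^{k+1})$ with $c\neq0$. $\epsilon^{-1}\mathcal A_{\mathfrak L}$ denotes the set of expansions $\epsilon^{-1}L$ with $L\in\mathcal A_{\mathfrak L}$. *)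

theory Defs
  imports "Jordan_Normal_Form.Determinant" "HOL-Computational_Algebra.Formal_Laurent_Series"
begin

text \<open>An element of C^{NxN}((eps)) is modelled as an N x N matrix whose entries are
  formal Laurent series in eps over the complex numbers.\<close>

type_synonym mexp = "complex fls mat"

definition bigO_eps :: "complex fls \<Rightarrow> int \<Rightarrow> bool" where
  "bigO_eps f k \<longleftrightarrow> (\<forall>n<k. fls_nth f n = 0)"

definition exact_order_eps :: "complex fls \<Rightarrow> int \<Rightarrow> bool" where
  "exact_order_eps f k \<longleftrightarrow> (\<exists>c. c \<noteq> 0 \<and> bigO_eps (f - fls_const c * fls_X_intpow k) (k + 1))"

definition coeff_mat :: "mexp \<Rightarrow> int \<Rightarrow> complex mat" where
  "coeff_mat M n = map_mat (\<lambda>f. fls_nth f n) M"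

definition Aring :: "nat \<Rightarrow> mexp set" where
  "Aring N = {M \<in> carrier_mat N N. \<forall>i<N. \<forall>j<N. \<forall>n<0. fls_nth (M $$ (i,j)) n = 0}"

definition Kset :: "nat \<Rightarrow> nat \<Rightarrow> complex mat set" where
  "Kset N r = {M. \<exists>C D. C \<in> carrier_mat (N - r) r \<and> D \<in> carrier_mat (N - r) (N - r) \<and>
      M = four_block_mat (0\<^sub>m r r) (0\<^sub>m r (N - r)) C D}"

definition Lset :: "nat \<Rightarrow> nat \<Rightarrow> complex mat set" where
  "Lset N r = {M. \<exists>A C. A \<in> carrier_mat r r \<and> C \<in> carrier_mat (N - r) r \<and>
      M = four_block_mat A (0\<^sub>m r (N - r)) C (0\<^sub>m (N - r) (N - r))}"

definition AK :: "nat \<Rightarrow> nat \<Rightarrow> mexp set" where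
  "AK N r = {K \<in> Aring N. coeff_mat K 0 \<in> Kset N r}"

definition AL :: "nat \<Rightarrow> nat \<Rightarrow> mexp set" where
  "AL N r = {L \<in> Aring N. coeff_mat L 0 \<in> Lset N r}"

definition epsinv_AL :: "nat \<Rightarrow> nat \<Rightarrow> mexp set" where
  "epsinv_AL N r = {fls_X_intpow (-1) \<cdot>\<^sub>m L | L. L \<in> AL N r}"

definition is_subring_noid :: "nat \<Rightarrow> mexp set \<Rightarrow> bool" where
  "is_subring_noid N S \<longleftrightarrow> S \<subseteq> carrier_mat N N \<and> 0\<^sub>m N N \<in> S \<and>
     (\<forall>X\<in>S. \<forall>Y\<in>S. X + Y \<in> S \<and> X - Y \<in> S \<and> X * Y \<in> S)"

end

theory Submission
  imports Defs
begin

text \<open>Everything reduces to the rescaling \<open>S\<^sub>k = diag(\<epsilon>\<^sup>k I\<^sub>r, I\<^sub>N\<^sub>-\<^sub>r)\<close>.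
  For \<open>K \<in> A\<^sub>K\<close> the first \<open>r\<close> rows are divisible by \<open>\<epsilon>\<close>, so \<open>K' = S\<^sub>-\<^sub>1 K\<close> is again a regular
  expansion, with constant term \<open>[A\<^sub>1 B\<^sub>1; C\<^sub>0 D\<^sub>0]\<close>, and \<open>K = S\<^sub>1 K'\<close>. Dually, for
  \<open>L \<in> \<epsilon>\<^sup>-\<^sup>1 A\<^sub>L\<close> the last \<open>N - r\<close> columns are regular, so \<open>L' = L S\<^sub>1\<close> is regular with constant
  term \<open>[A\<^sub>0 B\<^sub>1; C\<^sub>0 D\<^sub>1]\<close> and \<open>L = L' S\<^sub>-\<^sub>1\<close>. Taking determinants gives (3) and (4). Under the
  exact-order hypotheses of (2) the constant term of \<open>det K'\<close> (resp. \<open>det L'\<close>) is nonzero, so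
  \<open>K'\<close> (resp. \<open>L'\<close>) is invertible within the regular expansions, and \<open>K\<^sup>-\<^sup>1 = K'\<^sup>-\<^sup>1 S\<^sub>-\<^sub>1\<close>,
  \<open>L\<^sup>-\<^sup>1 = S\<^sub>1 L'\<^sup>-\<^sup>1\<close> have the required shapes. Finally \<open>L K = L' S\<^sub>-\<^sub>1 S\<^sub>1 K' = L' K'\<close> gives (6);
  (1) and (5) only need that taking constant terms is multiplicative.\<close>

interpretation fps_to_fls_hom: comm_ring_hom "fps_to_fls :: complex fps \<Rightarrow> complex fls"
  by unfold_locales (auto simp: fls_times_fps_to_fls)

interpretation fps_const_term_hom: comm_ring_hom "(\<lambda>f. fps_nth f 0) :: complex fps \<Rightarrow> complex"
  by unfold_locales auto

text \<open>\<open>fls_X_intpow k\<close> abbreviates \<open>fls_shift (- k) 1\<close>, so this computes the coefficients of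
  \<open>\<epsilon>\<^sup>k f\<close>.\<close>
lemma fls_nth_shift_one_times [simp]:
  "fls_nth (fls_shift m 1 * (f :: complex fls)) n = fls_nth f (n + m)"
  by (simp add: fls_shifted_times_simps)

lemma Aring_cases:
  assumes "M \<in> Aring N"
  obtains M' where "M' \<in> carrier_mat N N" "M = map_mat fps_to_fls M'"
proof
  show "map_mat fls_regpart M \<in> carrier_mat N N" using assms by (simp add: Aring_def)
  show "M = map_mat fps_to_fls (map_mat fls_regpart M)"
    using assms by (intro eq_matI) (auto simp: Aring_def intro!: fls_eqI)
qed

lemma map_fps_to_fls_in_Aring: "M \<in> carrier_mat N N \<Longrightarrow> map_mat fps_to_fls M \<in> Aring N"
  by (simp add: Aring_def)

lemma coeff_mat_map_fps_to_fls: "coeff_mat (map_mat fps_to_fls M) 0 = map_mat (\<lambda>f. fps_nth f 0) M"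
  unfolding coeff_mat_def by (intro eq_matI) auto

lemma Aring_mult:
  assumes "A \<in> Aring N" "B \<in> Aring N"
  shows "A * B \<in> Aring N" "coeff_mat (A * B) 0 = coeff_mat A 0 * coeff_mat B 0"
proof -
  obtain A' B' where A': "A' \<in> carrier_mat N N" "A = map_mat fps_to_fls A'"
    and B': "B' \<in> carrier_mat N N" "B = map_mat fps_to_fls B'"
    using assms by (meson Aring_cases)
  have AB: "A * B = map_mat fps_to_fls (A' * B')"
    unfolding A' B' by (rule fps_to_fls_hom.mat_hom_mult[OF A'(1) B'(1), symmetric])
  show "A * B \<in> Aring N" unfolding AB using A' B' by (simp add: map_fps_to_fls_in_Aring)
  show "coeff_mat (A * B) 0 = coeff_mat A 0 * coeff_mat B 0"
    unfolding AB coeff_mat_map_fps_to_fls unfolding A' B' coeff_mat_map_fps_to_fls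
    by (rule fps_const_term_hom.mat_hom_mult[OF A'(1) B'(1)])
qed

lemma det_Aring:
  assumes "M \<in> Aring N"
  obtains h where "det M = fps_to_fls h" "fps_nth h 0 = det (coeff_mat M 0)"
proof -
  obtain M' where M': "M' \<in> carrier_mat N N" "M = map_mat fps_to_fls M'"
    using assms by (rule Aring_cases)
  show thesis
    by (rule that[of "det M'"]) (simp_all add: M'(2) coeff_mat_map_fps_to_fls)
qed

text \<open>The adjugate formula, used over power series, where a nonzero constant term makes the
  determinant a unit.\<close>
lemma Aring_right_inverse:
  assumes "M \<in> Aring N" "det (coeff_mat M 0) \<noteq> 0"
  obtains T where "T \<in> Aring N" "M * T = 1\<^sub>m N"
proof -
  obtain M' where M': "M' \<in> carrier_mat N N" "M = map_mat fps_to_fls M'"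
    using assms(1) by (rule Aring_cases)
  have unit: "inverse (det M') * det M' = 1"
    using assms(2) by (simp add: M'(2) coeff_mat_map_fps_to_fls inverse_mult_eq_1)
  define T' where "T' = inverse (det M') \<cdot>\<^sub>m adj_mat M'"
  have T': "T' \<in> carrier_mat N N" unfolding T'_def using adj_mat(1)[OF M'(1)] by simp
  have "M' * T' = inverse (det M') \<cdot>\<^sub>m (det M' \<cdot>\<^sub>m 1\<^sub>m N)"
    unfolding T'_def using adj_mat[OF M'(1)] by (simp add: mult_smult_distrib[OF M'(1)])
  also have "\<dots> = 1\<^sub>m N" using unit by (intro eq_matI) auto
  finally have "M' * T' = 1\<^sub>m N" .
  then show thesis
    by (intro that[of "map_mat fps_to_fls T'"])
      (simp_all add: T' map_fps_to_fls_in_Aring M'(2) fps_to_fls_hom.mat_hom_one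
        flip: fps_to_fls_hom.mat_hom_mult[OF M'(1) T'])
qed

lemma coeff_mat_nth [simp]:
  "i < dim_row M \<Longrightarrow> j < dim_col M \<Longrightarrow> coeff_mat M k $$ (i,j) = fls_nth (M $$ (i,j)) k"
  by (simp add: coeff_mat_def)

lemma coeff_mat_carrier [simp]: "coeff_mat M k \<in> carrier_mat m n \<longleftrightarrow> M \<in> carrier_mat m n"
  by (simp add: coeff_mat_def)

lemma coeff_mat_dims [simp]:
  "dim_row (coeff_mat M k) = dim_row M" "dim_col (coeff_mat M k) = dim_col M"
  by (simp_all add: coeff_mat_def)

definition lead_scale :: "nat \<Rightarrow> nat \<Rightarrow> int \<Rightarrow> complex fls mat" where
  "lead_scale N r k = mat_diag N (\<lambda>i. if i < r then fls_X_intpow k else 1)"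

lemma lead_scale_carrier [simp]: "lead_scale N r k \<in> carrier_mat N N"
  by (simp add: lead_scale_def)

lemma lead_scale_dims [simp]: "dim_row (lead_scale N r k) = N" "dim_col (lead_scale N r k) = N"
  by (simp_all add: lead_scale_def mat_diag_def)

lemma lead_scale_mult: "lead_scale N r k * lead_scale N r l = lead_scale N r (k + l)"
  unfolding lead_scale_def mat_diag_diag
  by (rule arg_cong[where f="mat_diag N"]) (auto simp: fls_X_intpow_times_fls_X_intpow)

lemma lead_scale_0 [simp]: "lead_scale N r 0 = 1\<^sub>m N"
  unfolding lead_scale_def mat_diag_one[symmetric]
  by (rule arg_cong[where f="mat_diag N"]) auto

lemma det_lead_scale:
  assumes "r \<le> N"
  shows "det (lead_scale N r k) = fls_X_intpow (int r * k)"
proof -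
  have "det (lead_scale N r k) = (\<Prod>i\<in>{0..<N}. if i < r then fls_X_intpow k else 1)"
    by (subst det_upper_triangular[of _ N])
      (auto simp: lead_scale_def mat_diag_def diag_mat_def prod.distinct_set_conv_list[symmetric])
  also have "\<dots> = fls_X_intpow k ^ r"
  proof -
    have "{x. x < N \<and> x < r} = {..<r}" using assms by auto
    then show ?thesis by (simp add: prod.If_cases Int_def atLeast0LessThan)
  qed
  finally show ?thesis by (simp add: fls_X_intpow_power)
qed

lemma lead_scale_times:
  assumes "dim_row M = N"
  shows "lead_scale N r k * M =
    mat N (dim_col M) (\<lambda>(i,j). if i < r then fls_X_intpow k * M $$ (i,j) else M $$ (i,j))"
proof -
  have M: "M \<in> carrier_mat N (dim_col M)" by (rule carrier_matI[OF assms refl])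
  show ?thesis
    unfolding lead_scale_def mat_diag_mult_left[OF M] by (rule cong_mat) auto
qed

lemma times_lead_scale:
  assumes "dim_col M = N"
  shows "M * lead_scale N r k =
    mat (dim_row M) N (\<lambda>(i,j). if j < r then fls_X_intpow k * M $$ (i,j) else M $$ (i,j))"
proof -
  have M: "M \<in> carrier_mat (dim_row M) N" by (rule carrier_matI[OF refl assms])
  show ?thesis
    unfolding lead_scale_def mat_diag_mult_right[OF M] by (rule cong_mat) auto
qed

lemma det_lead_scale_times:
  assumes "r \<le> N" "M \<in> carrier_mat N N"
  shows "det (lead_scale N r k * M) = fls_X_intpow (int r * k) * det M"
  using det_mult[OF lead_scale_carrier assms(2)] by (simp add: det_lead_scale[OF assms(1)])

lemma det_times_lead_scale:
  assumes "r \<le> N" "M \<in> carrier_mat N N"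
  shows "det (M * lead_scale N r k) = fls_X_intpow (int r * k) * det M"
  using det_mult[OF assms(2) lead_scale_carrier] by (simp add: det_lead_scale[OF assms(1)] mult.commute)

lemma mult_assoc_4_mat:
  assumes "A \<in> carrier_mat n n" "B \<in> carrier_mat n n" "C \<in> carrier_mat n n" "D \<in> carrier_mat n n"
  shows "(A * B) * (C * D) = A * (B * C) * D"
proof -
  have "(A * B) * (C * D) = A * (B * (C * D))"
    using assms by (intro assoc_mult_mat mult_carrier_mat)
  also have "B * (C * D) = (B * C) * D"
    using assms by (intro assoc_mult_mat[symmetric])
  also have "A * ((B * C) * D) = A * (B * C) * D"
    using assms by (intro assoc_mult_mat[symmetric] mult_carrier_mat)
  finally show ?thesis .
qed

lemma lead_scale_times_rescaled:
  "M \<in> carrier_mat N N \<Longrightarrow> lead_scale N r (- k) * (lead_scale N r k * M) = M"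
  by (simp add: assoc_mult_mat[of _ N N _ N _ N, symmetric] lead_scale_mult)

lemma rescaled_times_lead_scale:
  "M \<in> carrier_mat N N \<Longrightarrow> (M * lead_scale N r k) * lead_scale N r (- k) = M"
  by (simp add: assoc_mult_mat[of _ N N _ N _ N] lead_scale_mult)

lemma exact_order_eps_nth: "exact_order_eps f k \<Longrightarrow> fls_nth f k \<noteq> 0"
  by (auto simp: exact_order_eps_def bigO_eps_def fls_X_intpow_times_conv_shift)

lemma bigO_eps_X_intpow_times_det:
  assumes "M \<in> Aring N"
  shows "bigO_eps (fls_X_intpow k * det M - fls_X_intpow k * fls_const (det (coeff_mat M 0))) (k + 1)"
proof -
  obtain h where h: "det M = fps_to_fls h" "fps_nth h 0 = det (coeff_mat M 0)"
    using assms by (rule det_Aring)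
  show ?thesis
    unfolding bigO_eps_def h(1) h(2)[symmetric]
    by (auto simp: fls_X_intpow_times_conv_shift)
qed

lemma exact_order_eps_X_intpow_times_det:
  assumes "M \<in> Aring N" "exact_order_eps (fls_X_intpow k * det M) k"
  shows "det (coeff_mat M 0) \<noteq> 0"
proof -
  obtain h where h: "det M = fps_to_fls h" "fps_nth h 0 = det (coeff_mat M 0)"
    using assms(1) by (rule det_Aring)
  show ?thesis using exact_order_eps_nth[OF assms(2)] by (simp add: h)
qed

context
  fixes N r :: nat
  assumes r_le_N: "r \<le> N"
begin

lemma Kset_iff:
  "M \<in> Kset N r \<longleftrightarrow> M \<in> carrier_mat N N \<and> (\<forall>i<r. \<forall>j<N. M $$ (i,j) = 0)"
proof
  assume "M \<in> Kset N r"
  then show "M \<in> carrier_mat N N \<and> (\<forall>i<r. \<forall>j<N. M $$ (i,j) = 0)"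
    using r_le_N by (auto simp: Kset_def)
next
  assume M: "M \<in> carrier_mat N N \<and> (\<forall>i<r. \<forall>j<N. M $$ (i,j) = 0)"
  let ?C = "mat (N - r) r (\<lambda>(i,j). M $$ (i + r, j))"
  let ?D = "mat (N - r) (N - r) (\<lambda>(i,j). M $$ (i + r, j + r))"
  have "M = four_block_mat (0\<^sub>m r r) (0\<^sub>m r (N - r)) ?C ?D"
    using M r_le_N by (intro eq_matI) auto
  then show "M \<in> Kset N r" unfolding Kset_def by force
qed

lemma Lset_iff:
  "M \<in> Lset N r \<longleftrightarrow> M \<in> carrier_mat N N \<and> (\<forall>i<N. \<forall>j<N. r \<le> j \<longrightarrow> M $$ (i,j) = 0)"
proof
  assume "M \<in> Lset N r"
  then show "M \<in> carrier_mat N N \<and> (\<forall>i<N. \<forall>j<N. r \<le> j \<longrightarrow> M $$ (i,j) = 0)"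
    using r_le_N by (auto simp: Lset_def)
next
  assume M: "M \<in> carrier_mat N N \<and> (\<forall>i<N. \<forall>j<N. r \<le> j \<longrightarrow> M $$ (i,j) = 0)"
  let ?A = "mat r r (\<lambda>(i,j). M $$ (i, j))"
  let ?C = "mat (N - r) r (\<lambda>(i,j). M $$ (i + r, j))"
  have "M = four_block_mat ?A (0\<^sub>m r (N - r)) ?C (0\<^sub>m (N - r) (N - r))"
    using M r_le_N by (intro eq_matI) auto
  then show "M \<in> Lset N r" unfolding Lset_def by force
qed

lemma AK_iff:
  "K \<in> AK N r \<longleftrightarrow> K \<in> Aring N \<and> (\<forall>i<N. \<forall>j<N. i < r \<longrightarrow> fls_nth (K $$ (i,j)) 0 = 0)"
  using r_le_N by (auto simp: AK_def Kset_iff Aring_def coeff_mat_def)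

lemma AL_iff:
  "L \<in> AL N r \<longleftrightarrow> L \<in> Aring N \<and> (\<forall>i<N. \<forall>j<N. r \<le> j \<longrightarrow> fls_nth (L $$ (i,j)) 0 = 0)"
  using r_le_N by (auto simp: AL_def Lset_iff Aring_def coeff_mat_def)

lemma epsinv_AL_iff:
  "L \<in> epsinv_AL N r \<longleftrightarrow> L \<in> carrier_mat N N \<and>
    (\<forall>i<N. \<forall>j<N. \<forall>n < -1. fls_nth (L $$ (i,j)) n = 0) \<and>
    (\<forall>i<N. \<forall>j<N. r \<le> j \<longrightarrow> fls_nth (L $$ (i,j)) (-1) = 0)"
proof
  assume "L \<in> epsinv_AL N r"
  then obtain L' where "L = fls_X_intpow (-1) \<cdot>\<^sub>m L'" "L' \<in> AL N r"
    by (auto simp: epsinv_AL_def)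
  then show "L \<in> carrier_mat N N \<and> (\<forall>i<N. \<forall>j<N. \<forall>n < -1. fls_nth (L $$ (i,j)) n = 0) \<and>
    (\<forall>i<N. \<forall>j<N. r \<le> j \<longrightarrow> fls_nth (L $$ (i,j)) (-1) = 0)"
    using r_le_N by (auto simp: AL_iff Aring_def)
next
  assume L: "L \<in> carrier_mat N N \<and> (\<forall>i<N. \<forall>j<N. \<forall>n < -1. fls_nth (L $$ (i,j)) n = 0) \<and>
    (\<forall>i<N. \<forall>j<N. r \<le> j \<longrightarrow> fls_nth (L $$ (i,j)) (-1) = 0)"
  have "fls_X_intpow 1 \<cdot>\<^sub>m L \<in> AL N r"
    using L r_le_N by (auto simp: AL_iff Aring_def)
  moreover have "L = fls_X_intpow (-1) \<cdot>\<^sub>m (fls_X_intpow 1 \<cdot>\<^sub>m L)"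
    using L by (intro eq_matI) (auto intro!: fls_eqI)
  ultimately show "L \<in> epsinv_AL N r" unfolding epsinv_AL_def by blast
qed

lemma AK_rescaled:
  assumes "K \<in> AK N r"
  shows "lead_scale N r (-1) * K \<in> Aring N"
    "coeff_mat (lead_scale N r (-1) * K) 0 =
      mat N N (\<lambda>(i,j). fls_nth (K $$ (i,j)) (if i < r then 1 else 0))"
proof -
  have K: "K \<in> Aring N" "\<And>i j. i < N \<Longrightarrow> j < N \<Longrightarrow> i < r \<Longrightarrow> fls_nth (K $$ (i,j)) 0 = 0"
    using assms by (auto simp: AK_iff)
  have "fls_nth (K $$ (i,j)) n = 0" if "i < N" "j < N" "i < r" "n \<le> 0" for i j n
    using K that by (cases "n < 0") (auto simp: Aring_def)
  then show "lead_scale N r (-1) * K \<in> Aring N"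
    using K(1) by (auto simp: Aring_def lead_scale_times)
  show "coeff_mat (lead_scale N r (-1) * K) 0 =
      mat N N (\<lambda>(i,j). fls_nth (K $$ (i,j)) (if i < r then 1 else 0))"
    using K(1) by (intro eq_matI) (auto simp: Aring_def lead_scale_times)
qed

lemma epsinv_AL_rescaled:
  assumes "L \<in> epsinv_AL N r"
  shows "L * lead_scale N r 1 \<in> Aring N"
    "coeff_mat (L * lead_scale N r 1) 0 =
      mat N N (\<lambda>(i,j). fls_nth (L $$ (i,j)) (if j < r then -1 else 0))"
proof -
  have L: "L \<in> carrier_mat N N" "\<And>i j n. i < N \<Longrightarrow> j < N \<Longrightarrow> n < -1 \<Longrightarrow> fls_nth (L $$ (i,j)) n = 0"
    "\<And>i j. i < N \<Longrightarrow> j < N \<Longrightarrow> r \<le> j \<Longrightarrow> fls_nth (L $$ (i,j)) (-1) = 0"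
    using assms by (auto simp: epsinv_AL_iff)
  have "fls_nth (L $$ (i,j)) n = 0" if "i < N" "j < N" "r \<le> j" "n < 0" for i j n
    using L that by (cases "n = -1") auto
  then show "L * lead_scale N r 1 \<in> Aring N"
    using L by (auto simp: Aring_def times_lead_scale)
  show "coeff_mat (L * lead_scale N r 1) 0 =
      mat N N (\<lambda>(i,j). fls_nth (L $$ (i,j)) (if j < r then -1 else 0))"
    using L(1) by (intro eq_matI) (auto simp: times_lead_scale)
qed

lemma lead_scale_times_Aring_in_AK: "T \<in> Aring N \<Longrightarrow> lead_scale N r 1 * T \<in> AK N r"
  using r_le_N by (auto simp: AK_iff Aring_def lead_scale_times)

lemma Aring_times_lead_scale_in_epsinv_AL:
  "T \<in> Aring N \<Longrightarrow> T * lead_scale N r (-1) \<in> epsinv_AL N r"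
  by (auto simp: epsinv_AL_iff Aring_def times_lead_scale)

lemma Kset_times: "A \<in> Kset N r \<Longrightarrow> B \<in> carrier_mat N N \<Longrightarrow> A * B \<in> Kset N r"
  using r_le_N by (auto simp: Kset_iff scalar_prod_def)

lemma times_Lset: "A \<in> carrier_mat N N \<Longrightarrow> B \<in> Lset N r \<Longrightarrow> A * B \<in> Lset N r"
  by (auto simp: Lset_iff scalar_prod_def)

lemma AK_times_Aring: "K \<in> AK N r \<Longrightarrow> M \<in> Aring N \<Longrightarrow> K * M \<in> AK N r"
  using Aring_mult[of K N M] Kset_times[of "coeff_mat K 0" "coeff_mat M 0"]
  by (simp add: AK_def Aring_def)

lemma Aring_times_AL: "M \<in> Aring N \<Longrightarrow> L \<in> AL N r \<Longrightarrow> M * L \<in> AL N r"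
  using Aring_mult[of M N L] times_Lset[of "coeff_mat M 0" "coeff_mat L 0"]
  by (simp add: AL_def Aring_def)

lemma AK_subring: "is_subring_noid N (AK N r)"
  using AK_times_Aring
  by (auto simp: is_subring_noid_def AK_iff Aring_def minus_carrier_mat)

lemma AL_subring: "is_subring_noid N (AL N r)"
  using Aring_times_AL
  by (auto simp: is_subring_noid_def AL_iff Aring_def minus_carrier_mat)

lemma AK_factor: "K \<in> AK N r \<Longrightarrow> lead_scale N r 1 * (lead_scale N r (-1) * K) = K"
  using lead_scale_times_rescaled[of K N r "-1"] by (simp add: AK_def Aring_def)

lemma epsinv_AL_factor: "L \<in> epsinv_AL N r \<Longrightarrow> (L * lead_scale N r 1) * lead_scale N r (-1) = L"
  using rescaled_times_lead_scale[of L N r 1] by (simp add: epsinv_AL_iff)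

lemma det_AK:
  assumes "K \<in> AK N r"
  shows "det K = fls_X_intpow (int r) * det (lead_scale N r (-1) * K)"
proof -
  have "lead_scale N r (-1) * K \<in> carrier_mat N N"
    using AK_rescaled(1)[OF assms] by (simp add: Aring_def)
  then have "det (lead_scale N r 1 * (lead_scale N r (-1) * K)) =
      fls_X_intpow (int r) * det (lead_scale N r (-1) * K)"
    by (simp add: det_lead_scale_times[OF r_le_N])
  then show ?thesis by (simp only: AK_factor[OF assms])
qed

lemma det_epsinv_AL:
  assumes "L \<in> epsinv_AL N r"
  shows "det L = fls_X_intpow (- int r) * det (L * lead_scale N r 1)"
proof -
  have "L * lead_scale N r 1 \<in> carrier_mat N N"
    using epsinv_AL_rescaled(1)[OF assms] by (simp add: Aring_def)
  then have "det ((L * lead_scale N r 1) * lead_scale N r (-1)) =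
      fls_X_intpow (- int r) * det (L * lead_scale N r 1)"
    by (simp add: det_times_lead_scale[OF r_le_N])
  then show ?thesis by (simp only: epsinv_AL_factor[OF assms])
qed

lemma AK_inverse:
  assumes K: "K \<in> AK N r" and order: "exact_order_eps (det K) (int r)"
  shows "\<exists>Ki \<in> carrier_mat N N. K * Ki = 1\<^sub>m N \<and> Ki * K = 1\<^sub>m N \<and> Ki \<in> epsinv_AL N r"
proof -
  let ?K' = "lead_scale N r (-1) * K"
  have "det (coeff_mat ?K' 0) \<noteq> 0"
    using exact_order_eps_X_intpow_times_det AK_rescaled(1)[OF K] order det_AK[OF K] by metis
  then obtain T where T: "T \<in> Aring N" "?K' * T = 1\<^sub>m N"
    using Aring_right_inverse AK_rescaled(1)[OF K] by blast
  have carrier: "K \<in> carrier_mat N N" "?K' \<in> carrier_mat N N" "T \<in> carrier_mat N N"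
    using K AK_rescaled(1)[OF K] T(1) by (auto simp: AK_def Aring_def)
  have "K * (T * lead_scale N r (-1)) = (lead_scale N r 1 * ?K') * (T * lead_scale N r (-1))"
    by (simp add: AK_factor[OF K])
  also have "\<dots> = lead_scale N r 1 * (?K' * T) * lead_scale N r (-1)"
    by (rule mult_assoc_4_mat[OF lead_scale_carrier carrier(2,3) lead_scale_carrier])
  also have "\<dots> = 1\<^sub>m N"
    by (simp add: T(2) lead_scale_mult)
  finally have right: "K * (T * lead_scale N r (-1)) = 1\<^sub>m N" .
  show ?thesis
    using mat_mult_left_right_inverse[OF carrier(1) _ right] carrier(3) right
      Aring_times_lead_scale_in_epsinv_AL[OF T(1)] mult_carrier_mat[OF carrier(3) lead_scale_carrier]
    by (intro bexI[of _ "T * lead_scale N r (-1)"]) auto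
qed

lemma epsinv_AL_inverse:
  assumes L: "L \<in> epsinv_AL N r" and order: "exact_order_eps (det L) (- int r)"
  shows "\<exists>Li \<in> carrier_mat N N. L * Li = 1\<^sub>m N \<and> Li * L = 1\<^sub>m N \<and> Li \<in> AK N r"
proof -
  let ?L' = "L * lead_scale N r 1"
  have "det (coeff_mat ?L' 0) \<noteq> 0"
    using exact_order_eps_X_intpow_times_det epsinv_AL_rescaled(1)[OF L] order det_epsinv_AL[OF L]
    by metis
  then obtain T where T: "T \<in> Aring N" "?L' * T = 1\<^sub>m N"
    using Aring_right_inverse epsinv_AL_rescaled(1)[OF L] by blast
  have carrier: "L \<in> carrier_mat N N" "?L' \<in> carrier_mat N N" "T \<in> carrier_mat N N"
    using L epsinv_AL_rescaled(1)[OF L] T(1) by (auto simp: epsinv_AL_iff Aring_def)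
  have "L * (lead_scale N r 1 * T) = (?L' * lead_scale N r (-1)) * (lead_scale N r 1 * T)"
    by (simp add: epsinv_AL_factor[OF L])
  also have "\<dots> = ?L' * (lead_scale N r (-1) * lead_scale N r 1) * T"
    by (rule mult_assoc_4_mat[OF carrier(2) lead_scale_carrier lead_scale_carrier carrier(3)])
  also have "\<dots> = 1\<^sub>m N"
    using carrier by (simp add: T(2) lead_scale_mult)
  finally have right: "L * (lead_scale N r 1 * T) = 1\<^sub>m N" .
  show ?thesis
    using mat_mult_left_right_inverse[OF carrier(1) _ right] carrier(3) right
      lead_scale_times_Aring_in_AK[OF T(1)] mult_carrier_mat[OF lead_scale_carrier carrier(3)]
    by (intro bexI[of _ "lead_scale N r 1 * T"]) auto
qed

lemma epsinv_AL_times_AK: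
  assumes L: "L \<in> epsinv_AL N r" and K: "K \<in> AK N r"
  shows "L * K \<in> Aring N"
proof -
  let ?L' = "L * lead_scale N r 1" and ?K' = "lead_scale N r (-1) * K"
  have carrier: "?L' \<in> carrier_mat N N" "?K' \<in> carrier_mat N N"
    using epsinv_AL_rescaled(1)[OF L] AK_rescaled(1)[OF K] by (auto simp: Aring_def)
  have "L * K = (?L' * lead_scale N r (-1)) * (lead_scale N r 1 * ?K')"
    by (simp add: epsinv_AL_factor[OF L] AK_factor[OF K])
  also have "\<dots> = ?L' * (lead_scale N r (-1) * lead_scale N r 1) * ?K'"
    by (rule mult_assoc_4_mat[OF carrier(1) lead_scale_carrier lead_scale_carrier carrier(2)])
  also have "\<dots> = ?L' * ?K'"
    using carrier by (simp add: lead_scale_mult)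
  finally show ?thesis
    using Aring_mult(1) epsinv_AL_rescaled(1)[OF L] AK_rescaled(1)[OF K] by simp
qed

lemma det_AK_expansion:
  assumes K: "K \<in> Aring N"
    and blocks: "A1 \<in> carrier_mat r r" "B1 \<in> carrier_mat r (N - r)"
      "C1 \<in> carrier_mat (N - r) r" "D1 \<in> carrier_mat (N - r) (N - r)"
      "C0 \<in> carrier_mat (N - r) r" "D0 \<in> carrier_mat (N - r) (N - r)"
    and K0: "coeff_mat K 0 = four_block_mat (0\<^sub>m r r) (0\<^sub>m r (N - r)) C0 D0"
    and K1: "coeff_mat K 1 = four_block_mat A1 B1 C1 D1"
  shows "bigO_eps (det K - fls_X_intpow (int r) * fls_const (det (four_block_mat A1 B1 C0 D0)))
    (int r + 1)"
proof -
  have Kc: "K \<in> carrier_mat N N" using K by (simp add: Aring_def)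
  have "fls_nth (K $$ (i,j)) n = coeff_mat K n $$ (i,j)" if "i < N" "j < N" for i j n
    using Kc that by simp
  then have K0_nth: "fls_nth (K $$ (i,j)) 0 = four_block_mat (0\<^sub>m r r) (0\<^sub>m r (N - r)) C0 D0 $$ (i,j)"
    and K1_nth: "fls_nth (K $$ (i,j)) 1 = four_block_mat A1 B1 C1 D1 $$ (i,j)"
    if "i < N" "j < N" for i j
    using that by (simp_all add: K0 K1)
  have "K \<in> AK N r"
    using K r_le_N blocks by (auto simp: AK_iff K0_nth)
  moreover have "coeff_mat (lead_scale N r (-1) * K) 0 = four_block_mat A1 B1 C0 D0"
    unfolding AK_rescaled(2)[OF \<open>K \<in> AK N r\<close>]
    using r_le_N blocks by (intro eq_matI) (auto simp: K0_nth K1_nth)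
  ultimately show ?thesis
    using bigO_eps_X_intpow_times_det[OF AK_rescaled(1)] det_AK by metis
qed

lemma det_epsinv_AL_expansion:
  assumes L: "L \<in> carrier_mat N N" "\<forall>i<N. \<forall>j<N. \<forall>n < -1. fls_nth (L $$ (i,j)) n = 0"
    and blocks: "A0 \<in> carrier_mat r r" "C0 \<in> carrier_mat (N - r) r"
      "A1 \<in> carrier_mat r r" "B1 \<in> carrier_mat r (N - r)"
      "C1 \<in> carrier_mat (N - r) r" "D1 \<in> carrier_mat (N - r) (N - r)"
    and L0: "coeff_mat L (-1) = four_block_mat A0 (0\<^sub>m r (N - r)) C0 (0\<^sub>m (N - r) (N - r))"
    and L1: "coeff_mat L 0 = four_block_mat A1 B1 C1 D1"
  shows "bigO_eps (det L - fls_X_intpow (- int r) * fls_const (det (four_block_mat A0 B1 C0 D1)))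
    (- int r + 1)"
proof -
  have "fls_nth (L $$ (i,j)) n = coeff_mat L n $$ (i,j)" if "i < N" "j < N" for i j n
    using L that by simp
  then have L0_nth: "fls_nth (L $$ (i,j)) (-1) =
      four_block_mat A0 (0\<^sub>m r (N - r)) C0 (0\<^sub>m (N - r) (N - r)) $$ (i,j)"
    and L1_nth: "fls_nth (L $$ (i,j)) 0 = four_block_mat A1 B1 C1 D1 $$ (i,j)"
    if "i < N" "j < N" for i j
    using that by (simp_all add: L0 L1)
  have "L \<in> epsinv_AL N r"
    using L r_le_N blocks by (auto simp: epsinv_AL_iff L0_nth)
  moreover have "coeff_mat (L * lead_scale N r 1) 0 = four_block_mat A0 B1 C0 D1"
    unfolding epsinv_AL_rescaled(2)[OF \<open>L \<in> epsinv_AL N r\<close>]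
    using r_le_N blocks by (intro eq_matI) (auto simp: L0_nth L1_nth)
  ultimately show ?thesis
    using bigO_eps_X_intpow_times_det[OF epsinv_AL_rescaled(1)] det_epsinv_AL by metis
qed

end

theorem proposition1:
  fixes N r :: nat
  assumes "1 \<le> r" and "r \<le> N - 1"
  shows
   \<comment> \<open>(1)\<close>
   "(is_subring_noid N (AK N r) \<and> AK N r \<subseteq> Aring N \<and>
     is_subring_noid N (AL N r) \<and> AL N r \<subseteq> Aring N)
   \<and> \<comment> \<open>(2)\<close>
    (\<forall>K \<in> AK N r. exact_order_eps (det K) (int r) \<longrightarrow>
       (\<exists>Ki \<in> carrier_mat N N. K * Ki = 1\<^sub>m N \<and> Ki * K = 1\<^sub>m N \<and> Ki \<in> epsinv_AL N r))
   \<and> (\<forall>L \<in> epsinv_AL N r. exact_order_eps (det L) (- int r) \<longrightarrow>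
       (\<exists>Li \<in> carrier_mat N N. L * Li = 1\<^sub>m N \<and> Li * L = 1\<^sub>m N \<and> Li \<in> AK N r))
   \<and> \<comment> \<open>(3)\<close>
    (\<forall>K A1 B1 C1 D1 C0 D0. K \<in> carrier_mat N N \<and> (\<forall>i<N. \<forall>j<N. \<forall>n<0. fls_nth (K $$ (i,j)) n = 0) \<and>
       A1 \<in> carrier_mat r r \<and> B1 \<in> carrier_mat r (N - r) \<and>
       C1 \<in> carrier_mat (N - r) r \<and> D1 \<in> carrier_mat (N - r) (N - r) \<and>
       C0 \<in> carrier_mat (N - r) r \<and> D0 \<in> carrier_mat (N - r) (N - r) \<and>
       coeff_mat K 0 = four_block_mat (0\<^sub>m r r) (0\<^sub>m r (N - r)) C0 D0 \<and>
       coeff_mat K 1 = four_block_mat A1 B1 C1 D1 \<longrightarrow>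
       bigO_eps (det K - fls_X_intpow (int r) * fls_const (det (four_block_mat A1 B1 C0 D0)))
                (int r + 1))
   \<and> \<comment> \<open>(4)\<close>
    (\<forall>L A0 C0 A1 B1 C1 D1. L \<in> carrier_mat N N \<and> (\<forall>i<N. \<forall>j<N. \<forall>n < -1. fls_nth (L $$ (i,j)) n = 0) \<and>
       A0 \<in> carrier_mat r r \<and> C0 \<in> carrier_mat (N - r) r \<and>
       A1 \<in> carrier_mat r r \<and> B1 \<in> carrier_mat r (N - r) \<and>
       C1 \<in> carrier_mat (N - r) r \<and> D1 \<in> carrier_mat (N - r) (N - r) \<and>
       coeff_mat L (-1) = four_block_mat A0 (0\<^sub>m r (N - r)) C0 (0\<^sub>m (N - r) (N - r)) \<and>
       coeff_mat L 0 = four_block_mat A1 B1 C1 D1 \<longrightarrow>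
       bigO_eps (det L - fls_X_intpow (- int r) * fls_const (det (four_block_mat A0 B1 C0 D1)))
                (- int r + 1))
   \<and> \<comment> \<open>(5)\<close>
    (\<forall>K \<in> AK N r. \<forall>M \<in> Aring N. K * M \<in> AK N r)
   \<and> (\<forall>M \<in> Aring N. \<forall>L \<in> AL N r. M * L \<in> AL N r)
   \<and> \<comment> \<open>(6)\<close>
    (\<forall>L \<in> epsinv_AL N r. \<forall>K \<in> AK N r. L * K \<in> Aring N)"
proof -
  have r: "r \<le> N" using assms by linarith
  have regular: "M \<in> Aring N" if "M \<in> carrier_mat N N"
    "\<forall>i<N. \<forall>j<N. \<forall>n<0. fls_nth (M $$ (i,j)) n = 0" for M
    using that by (simp add: Aring_def)
  show ?thesis
  proof (intro conjI ballI allI impI; (elim conjE)?)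
    show "AK N r \<subseteq> Aring N" "AL N r \<subseteq> Aring N" by (auto simp: AK_def AL_def)
  qed (fact AK_subring[OF r] AL_subring[OF r] AK_inverse[OF r] epsinv_AL_inverse[OF r]
      det_AK_expansion[OF r regular] det_epsinv_AL_expansion[OF r]
      AK_times_Aring[OF r] Aring_times_AL[OF r] epsinv_AL_times_AK[OF r])+
qed

end
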